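(* In $G=BS(1,2)$, the subgroup $\mathbb{Z}[1/2]$ has rational conjugacy growth: the series $\sum_{n\geq0}c_0(n)z^n$ is rational, where $c_0(n)$ is the number of conjugacy classes of $G$ contained in $\mathbb{Z}[1/2]$ whose length with respect to $\{a,t\}$ equals $n$.
   Context: $BS(1,2)=\langle a,t\mid tat^{-1}=a^2\rangle\cong \mathbb{Z}[1/2]\rtimes\mathbb{Z}$ via $a\mapsto(1,0)$, $t\mapsto(0,1)$, the generator of $\mathbb{Z}$ acting by multiplication by $2$; $\mathbb{Z}[1/2]=\{(x,0)\}$. The length of a conjugacy class is the minimal word length of its elements. A series is rational if it is a quotient of two polynomials with integer coefficients. *)

theory Defs
  imports Complex_Main "HOL-Computational_Algebra.Polynomial_FPS"
begin

text \<open>BS(1,2) realised as Z[1/2] \<rtimes> Z: elements are pairs (x,k) with x a dyadic rational.\<close>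

definition dyadic :: "rat \<Rightarrow> bool" where
  "dyadic x \<longleftrightarrow> (\<exists>m::int. \<exists>k::nat. x = of_int m / 2 ^ k)"

definition BS :: "(rat \<times> int) set" where
  "BS = {g. dyadic (fst g)}"

definition bs_mult :: "rat \<times> int \<Rightarrow> rat \<times> int \<Rightarrow> rat \<times> int" where
  "bs_mult g h = (fst g + (2::rat) powi (snd g) * fst h, snd g + snd h)"

definition bs_inv :: "rat \<times> int \<Rightarrow> rat \<times> int" where
  "bs_inv g = (- fst g / (2::rat) powi (snd g), - snd g)"

definition bs_one :: "rat \<times> int" where
  "bs_one = (0, 0)"

definition gen_a :: "rat \<times> int" where "gen_a = (1, 0)"
definition gen_t :: "rat \<times> int" where "gen_t = (0, 1)"

definition bs_gens :: "(rat \<times> int) set" where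
  "bs_gens = {gen_a, bs_inv gen_a, gen_t, bs_inv gen_t}"

definition word_eval :: "(rat \<times> int) list \<Rightarrow> rat \<times> int" where
  "word_eval w = foldr bs_mult w bs_one"

definition word_length :: "rat \<times> int \<Rightarrow> nat" where
  "word_length g = (LEAST n. \<exists>w. length w = n \<and> set w \<subseteq> bs_gens \<and> word_eval w = g)"

definition Zhalf :: "(rat \<times> int) set" where
  "Zhalf = {g \<in> BS. snd g = 0}"

definition conj_class :: "rat \<times> int \<Rightarrow> (rat \<times> int) set" where
  "conj_class g = {bs_mult (bs_mult h g) (bs_inv h) | h. h \<in> BS}"

definition class_length :: "(rat \<times> int) set \<Rightarrow> nat" where
  "class_length C = (LEAST n. \<exists>g \<in> C. word_length g = n)"

definition c0 :: "nat \<Rightarrow> nat" where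
  "c0 n = card {C. (\<exists>g \<in> BS. C = conj_class g) \<and> C \<subseteq> Zhalf \<and> class_length C = n}"

definition rational_series :: "int fps \<Rightarrow> bool" where
  "rational_series F \<longleftrightarrow>
     (\<exists>p q :: int poly. q \<noteq> 0 \<and> fps_of_poly q * F = fps_of_poly p)"

end

theory Submission
  imports Defs
begin

(* An element (x, 0) of Z[1/2] is conjugate exactly to the elements (2^l x, 0), so the classes
   inside Z[1/2] are those of 0 and of the odd integers m, and the class of m has the length
   alen |m| of (m, 0) itself, where alen obeys a min-recursion over halving. The upper bound comes
   from explicit words; for the lower bound, every word writes down a signed binary expansion of
   its a-exponent at a cost bounded by its length. For large n the odd k with alen k = n are
   exactly the numbers 4j +- 1 with alen j = n - 5, and the positive k with alen k = n are these
   together with the 2j with alen j = n - 2. Hence c0 n = c0 (n - 2) + 2 c0 (n - 5) for n >= 18,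
   and a linear recurrence makes the series rational. *)

lemma rational_series_of_linear_recurrence:
  fixes f c :: "nat \<Rightarrow> int"
  assumes "d \<le> N" and recurrence: "\<And>n. N \<le> n \<Longrightarrow> f n = (\<Sum>i=1..d. c i * f (n - i))"
  shows "rational_series (Abs_fps f)"
proof -
  define q :: "int poly" where "q = 1 - (\<Sum>i=1..d. monom (c i) i)"
  define R where "R = fps_of_poly q * Abs_fps f"
  have "fps_of_poly q = 1 - (\<Sum>i=1..d. fps_const (c i) * fps_X ^ i)"
    by (simp add: q_def fps_of_poly_diff fps_of_poly_sum fps_of_poly_monom)
  then have "R = Abs_fps f - (\<Sum>i=1..d. fps_const (c i) * (fps_X ^ i * Abs_fps f))"
    unfolding R_def by (simp add: left_diff_distrib sum_distrib_right mult.assoc)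
  then have R_nth: "fps_nth R n = f n - (\<Sum>i=1..d. c i * (if n < i then 0 else f (n - i)))" for n
    by (simp add: fps_sum_nth fps_X_power_mult_nth cong: if_cong)
  have R_zero: "fps_nth R n = 0" if "N \<le> n" for n
  proof -
    have "(\<Sum>i=1..d. c i * (if n < i then 0 else f (n - i))) = (\<Sum>i=1..d. c i * f (n - i))"
      using \<open>d \<le> N\<close> that by (intro sum.cong) auto
    then show ?thesis by (simp add: R_nth recurrence[OF that])
  qed
  have "fps_of_poly (truncate_fps N R) = R"
    by (rule fps_ext) (simp add: R_zero)
  moreover have "q \<noteq> 0"
  proof
    assume "q = 0"
    then have "coeff q 0 = 0" by simp
    moreover have "coeff q 0 = 1"
      by (simp add: q_def coeff_sum coeff_monom)
    ultimately show False by simp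
  qed
  ultimately show ?thesis
    unfolding rational_series_def R_def by metis
qed

section \<open>The length function for powers of a\<close>

lemma nat_le_1_or_double_cases:
  fixes n :: nat
  obtains "n \<le> 1" | y where "n = 2 * y" "1 \<le> y" | y where "n = 2 * y + 1" "1 \<le> y"
proof (cases "n \<le> 1")
  case False
  then show ?thesis
    by (cases "even n") (auto elim!: evenE oddE intro: that)
qed

(* The three candidates are the words a^n, t a^y t^-1 = a^(2y) and
   a^(+-1) t a^y t^-1 = a^(2y +- 1). *)
function alen :: "nat \<Rightarrow> nat" where
  "alen n = (if n \<le> 1 then n
     else if even n then min n (2 + alen (n div 2))
     else min n (3 + min (alen (n div 2)) (alen (n div 2 + 1))))"
  by auto
termination by (relation "measure id") (auto elim: oddE)

declare alen.simps [simp del]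

lemma alen_0 [simp]: "alen 0 = 0"
  and alen_Suc_0 [simp]: "alen (Suc 0) = 1"
  and alen_Suc_Suc_0 [simp]: "alen (Suc (Suc 0)) = 2"
  by (simp_all add: alen.simps)

lemma alen_even: "1 \<le> y \<Longrightarrow> alen (2 * y) = min (2 * y) (2 + alen y)"
  by (subst alen.simps) auto

lemma alen_odd: "1 \<le> y \<Longrightarrow> alen (2 * y + 1) = min (2 * y + 1) (3 + min (alen y) (alen (y + 1)))"
  by (subst alen.simps) auto

lemma alen_le: "alen n \<le> n"
  by (subst alen.simps) auto

lemma alen_Suc_le: "alen (Suc n) \<le> alen n + 1 \<and> alen n \<le> alen (Suc n) + 1"
proof (induction n rule: less_induct)
  case (less n)
  show ?case
  proof (cases n rule: nat_le_1_or_double_cases)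
    case 1
    then have "n = 0 \<or> n = 1" by auto
    then show ?thesis by auto
  next
    case (2 y)
    then have "alen (y + 1) \<le> alen y + 1 \<and> alen y \<le> alen (y + 1) + 1"
      using less by simp
    then show ?thesis using 2 alen_even alen_odd by auto
  next
    case (3 y)
    then have "alen (y + 1) \<le> alen y + 1 \<and> alen y \<le> alen (y + 1) + 1"
      using less by simp
    moreover have "Suc n = 2 * (y + 1)" using 3 by simp
    ultimately show ?thesis using 3 alen_even[of "y + 1"] alen_odd by auto
  qed
qed

lemma alen_add_le: "alen (n + k) \<le> alen n + k \<and> alen n \<le> alen (n + k) + k"
proof (induction k)
  case (Suc k)
  then show ?case using alen_Suc_le[of "n + k"] by (simp only: add_Suc_right) linarith
qed simp

lemma alen_double_le: "alen (2 * y) \<le> 2 + alen y"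
  by (cases "y = 0") (auto simp: alen_even)

lemma alen_le_double: "alen y \<le> alen (2 * y)"
  using alen_le[of y] by (cases "y = 0") (auto simp: alen_even)

lemma alen_double: "2 \<le> y \<Longrightarrow> alen (2 * y) = 2 + alen y"
  using alen_le[of y] by (auto simp: alen_even)

lemma alen_4_mult_plus_1: "2 \<le> k \<Longrightarrow> alen (4 * k + 1) = 5 + alen k"
proof -
  assume k: "2 \<le> k"
  have "alen k \<le> alen (k + 1) + 1" using alen_Suc_le by simp
  then have "min (alen (2 * k)) (alen (2 * k + 1)) = 2 + alen k"
    using k alen_double alen_odd[of k] alen_le[of k] by auto
  then show ?thesis
    using alen_odd[of "2 * k"] alen_le[of k] k by (simp add: algebra_simps)
qed

lemma alen_4_mult_minus_1: "3 \<le> k \<Longrightarrow> alen (4 * k - 1) = 5 + alen k"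
proof -
  assume "3 \<le> k"
  then obtain j where j: "k = j + 1" "2 \<le> j" by (intro that[of "k - 1"]) auto
  have "alen (j + 1) \<le> alen j + 1" using alen_Suc_le by simp
  moreover have "alen (2 * j + 1) = min (2 * j + 1) (3 + min (alen j) (alen (j + 1)))"
    using j alen_odd[of j] by simp
  moreover have "alen (2 * j + 1 + 1) = 2 + alen (j + 1)"
    using j alen_double[of "j + 1"] by (simp add: algebra_simps)
  ultimately have "min (alen (2 * j + 1)) (alen (2 * j + 1 + 1)) = 2 + alen (j + 1)"
    using j alen_le[of "j + 1"] by linarith
  then have "alen (2 * (2 * j + 1) + 1) = 5 + alen (j + 1)"
    using alen_odd[of "2 * j + 1"] alen_le[of "j + 1"] j by simp
  moreover have "4 * k - 1 = 2 * (2 * j + 1) + 1" using j by simp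
  ultimately show ?thesis using j by (simp only:)
qed

lemma le_2_pow_alen: "n \<le> 2 ^ alen n"
proof (induction n rule: less_induct)
  case (less n)
  have n_le: "n \<le> 2 ^ n" by (simp add: less_exp less_imp_le)
  show ?case
  proof (cases n rule: nat_le_1_or_double_cases)
    case 1
    then show ?thesis by (cases n) auto
  next
    case (2 y)
    then have "y \<le> 2 ^ alen y" using less by simp
    then have "n \<le> 2 ^ (2 + alen y)" using 2 by simp
    then show ?thesis using n_le 2 alen_even by (simp add: min_def)
  next
    case (3 y)
    then have "y \<le> 2 ^ alen y" "y + 1 \<le> 2 ^ alen (y + 1)" using less by simp_all
    then have "n \<le> 2 ^ (3 + alen y)" "n \<le> 2 ^ (3 + alen (y + 1))"
      using 3 by (simp_all add: power_add)
    then show ?thesis using n_le 3 alen_odd by (simp add: min_def)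
  qed
qed

lemma finite_alen_fibre: "finite {k. alen k = n}"
  by (rule finite_subset[of _ "{..2 ^ n}"]) (use le_2_pow_alen in auto)

definition alen_int :: "int \<Rightarrow> nat" where
  "alen_int x = alen (nat \<bar>x\<bar>)"

lemma alen_int_le_abs: "int (alen_int x) \<le> \<bar>x\<bar>"
  using alen_le[of "nat \<bar>x\<bar>"] by (simp add: alen_int_def)

lemma alen_int_add_le: "int (alen_int (x + d)) \<le> int (alen_int x) + \<bar>d\<bar>"
proof (cases "nat \<bar>x\<bar> \<le> nat \<bar>x + d\<bar>")
  case True
  then obtain k where "nat \<bar>x + d\<bar> = nat \<bar>x\<bar> + k" using le_Suc_ex by blast
  moreover have "int k \<le> \<bar>d\<bar>" using calculation by linarith
  ultimately show ?thesis using alen_add_le[of "nat \<bar>x\<bar>" k] by (simp add: alen_int_def)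
next
  case False
  then obtain k where "nat \<bar>x\<bar> = nat \<bar>x + d\<bar> + k" using le_Suc_ex nat_le_linear by blast
  moreover have "int k \<le> \<bar>d\<bar>" using calculation by linarith
  ultimately show ?thesis using alen_add_le[of "nat \<bar>x + d\<bar>" k] by (simp add: alen_int_def)
qed

lemma alen_int_double_le: "alen_int (2 * x) \<le> 2 + alen_int x"
  using alen_double_le[of "nat \<bar>x\<bar>"] by (simp add: alen_int_def abs_mult nat_mult_distrib)

lemma alen_int_le_mult_pow2: "alen_int x \<le> alen_int (x * 2 ^ s)"
proof (induction s)
  case (Suc s)
  then show ?case
    using alen_le_double[of "nat \<bar>x * 2 ^ s\<bar>"]
    by (simp add: alen_int_def abs_mult nat_mult_distrib mult_ac)
qed simp

section \<open>Signed binary expansions\<close>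

fun digits_val :: "int list \<Rightarrow> int" where
  "digits_val [] = 0"
| "digits_val (d # ds) = d + 2 * digits_val ds"

definition digits_cost :: "int list \<Rightarrow> int" where
  "digits_cost ds = (\<Sum>d\<leftarrow>ds. \<bar>d\<bar>)"

lemma digits_cost_Nil [simp]: "digits_cost [] = 0"
  and digits_cost_Cons [simp]: "digits_cost (d # ds) = \<bar>d\<bar> + digits_cost ds"
  and digits_cost_append_0 [simp]: "digits_cost (ds @ [0]) = digits_cost ds"
  by (simp_all add: digits_cost_def)

lemma digits_val_append_0 [simp]: "digits_val (ds @ [0]) = digits_val ds"
  by (induction ds) auto

lemma digits_val_update:
  "i < length ds \<Longrightarrow> digits_val (ds[i := ds ! i + e]) = digits_val ds + e * 2 ^ i"
  by (induction ds arbitrary: i) (auto simp: algebra_simps split: nat.split)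

lemma digits_cost_update:
  "i < length ds \<Longrightarrow> digits_cost (ds[i := ds ! i + e]) \<le> digits_cost ds + \<bar>e\<bar>"
  by (induction ds arbitrary: i) (auto simp: abs_triangle_ineq split: nat.split)

(* Horner's scheme: the word a^d0 t a^d1 t ... t a^dr t^-r represents
   a^(digits_val [d0, ..., dr]). *)
lemma alen_int_digits_val_le:
  "ds \<noteq> [] \<Longrightarrow> int (alen_int (digits_val ds)) \<le> digits_cost ds + 2 * (int (length ds) - 1)"
proof (induction ds)
  case (Cons d ds)
  show ?case
  proof (cases "ds = []")
    case True
    then show ?thesis using alen_int_le_abs[of d] by simp
  next
    case False
    have "int (alen_int (d + 2 * digits_val ds)) \<le> int (alen_int (2 * digits_val ds)) + \<bar>d\<bar>"
      using alen_int_add_le[of "2 * digits_val ds" d] by (simp add: add.commute)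
    also have "\<dots> \<le> 2 + int (alen_int (digits_val ds)) + \<bar>d\<bar>"
      using alen_int_double_le[of "digits_val ds"] by simp
    finally show ?thesis using Cons.IH[OF False] by simp
  qed
qed simp

lemma bs_mult_Pair [simp]: "bs_mult (x, k) (y, l) = (x + 2 powi k * y, k + l)"
  by (simp add: bs_mult_def)

lemma bs_mult_assoc: "bs_mult (bs_mult g h) f = bs_mult g (bs_mult h f)"
  by (simp add: bs_mult_def power_int_add algebra_simps)

lemma bs_mult_zero_left [simp]: "bs_mult (0, 0) g = g"
  by (cases g) simp

lemma bs_gens_eq: "bs_gens = {(1, 0), (-1, 0), (0, 1), (0, -1)}"
  by (simp add: bs_gens_def gen_a_def gen_t_def bs_inv_def)

lemma word_eval_Nil [simp]: "word_eval [] = (0, 0)"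
  by (simp add: word_eval_def bs_one_def)

lemma word_eval_Cons [simp]: "word_eval (s # w) = bs_mult s (word_eval w)"
  by (simp add: word_eval_def)

lemma word_eval_append: "word_eval (w @ v) = bs_mult (word_eval w) (word_eval v)"
  by (induction w) (simp_all add: bs_mult_assoc)

lemma word_eval_replicate_a: "word_eval (replicate n (1, 0)) = (of_nat n, 0)"
  by (induction n) simp_all

lemma word_eval_replicate_t: "word_eval (replicate n (0, j)) = (0, int n * j)"
  by (induction n) (simp_all add: algebra_simps)

definition t_pow_word :: "int \<Rightarrow> (rat \<times> int) list" where
  "t_pow_word l = (if 0 \<le> l then replicate (nat l) (0, 1) else replicate (nat (- l)) (0, -1))"

lemma t_pow_word_gens: "set (t_pow_word l) \<subseteq> bs_gens"
  by (auto simp: t_pow_word_def bs_gens_eq)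

lemma word_eval_t_pow_word: "word_eval (t_pow_word l) = (0, l)"
  by (simp add: t_pow_word_def word_eval_replicate_t)

lemma bs_conj_Zhalf: "bs_mult (bs_mult (y, l) (x, 0)) (bs_inv (y, l)) = (2 powi l * x, 0)"
  by (simp add: bs_inv_def)

lemma word_conj_t_pow:
  assumes "set w \<subseteq> bs_gens" "word_eval w = (v, 0)"
  shows "\<exists>w'. set w' \<subseteq> bs_gens \<and> word_eval w' = (2 powi l * v, 0)"
proof (intro exI conjI)
  show "set (t_pow_word l @ w @ t_pow_word (- l)) \<subseteq> bs_gens"
    using assms(1) t_pow_word_gens by auto
  have "word_eval (t_pow_word l @ w @ t_pow_word (- l))
      = bs_mult (bs_mult (0, l) (v, 0)) (bs_inv (0, l))"
    using assms(2) by (simp add: word_eval_append word_eval_t_pow_word bs_mult_assoc bs_inv_def)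
  then show "word_eval (t_pow_word l @ w @ t_pow_word (- l)) = (2 powi l * v, 0)"
    by (simp only: bs_conj_Zhalf)
qed

definition bs_flip :: "rat \<times> int \<Rightarrow> rat \<times> int" where
  "bs_flip g = (- fst g, snd g)"

lemma word_eval_map_bs_flip: "word_eval (map bs_flip w) = bs_flip (word_eval w)"
  by (induction w) (auto simp: bs_flip_def bs_mult_def)

lemma map_bs_flip_gens: "set w \<subseteq> bs_gens \<Longrightarrow> set (map bs_flip w) \<subseteq> bs_gens"
  by (auto simp: bs_gens_eq bs_flip_def)

lemma word_length_le: "set w \<subseteq> bs_gens \<Longrightarrow> word_eval w = g \<Longrightarrow> word_length g \<le> length w"
  unfolding word_length_def by (rule Least_le) auto

lemma le_word_length:
  assumes "set w \<subseteq> bs_gens" "word_eval w = g"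
    and "\<And>w. set w \<subseteq> bs_gens \<Longrightarrow> word_eval w = g \<Longrightarrow> b \<le> length w"
  shows "b \<le> word_length g"
proof -
  have "\<exists>w'. length w' = word_length g \<and> set w' \<subseteq> bs_gens \<and> word_eval w' = g"
    unfolding word_length_def by (rule LeastI_ex) (use assms(1,2) in blast)
  then obtain w' where "length w' = word_length g" "set w' \<subseteq> bs_gens" "word_eval w' = g"
    by blast
  then show ?thesis using assms(3)[of w'] by simp
qed

lemma word_eval_conj_t: "word_eval w = (v, 0) \<Longrightarrow> word_eval ((0, 1) # w @ [(0, -1)]) = (2 * v, 0)"
  by (simp add: word_eval_append)

lemma exists_word_alen:
  "\<exists>w. set w \<subseteq> bs_gens \<and> length w = alen n \<and> word_eval w = (of_nat n, 0)"
proof (induction n rule: less_induct)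
  case (less n)
  have direct: "\<exists>w. set w \<subseteq> bs_gens \<and> length w = n \<and> word_eval w = (of_nat n, 0)"
    by (intro exI[of _ "replicate n (1, 0)"]) (auto simp: bs_gens_eq word_eval_replicate_a)
  have double:
    "\<exists>w. set w \<subseteq> bs_gens \<and> length w = 2 + alen y \<and> word_eval w = (2 * of_nat y, 0)"
    if y_less: "y < n" for y
  proof -
    obtain w where w: "set w \<subseteq> bs_gens" "length w = alen y" "word_eval w = (of_nat y, 0)"
      using less[OF y_less] by blast
    show ?thesis
      by (intro exI[of _ "(0, 1) # w @ [(0, -1)]"])
        (use w(1,2) word_eval_conj_t[OF w(3)] in \<open>auto simp: bs_gens_eq\<close>)
  qed
  have double_shift:
    "\<exists>w. set w \<subseteq> bs_gens \<and> length w = 3 + alen y \<and> word_eval w = (e + 2 * of_nat y, 0)"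
    if y_less: "y < n" and e: "e = 1 \<or> e = -1" for y e
  proof -
    obtain w where w: "set w \<subseteq> bs_gens" "length w = 2 + alen y" "word_eval w = (2 * of_nat y, 0)"
      using double[OF y_less] by blast
    then show ?thesis
      by (intro exI[of _ "(e, 0) # w"]) (use e in \<open>auto simp: bs_gens_eq\<close>)
  qed
  show ?case
  proof (cases n rule: nat_le_1_or_double_cases)
    case 1
    then have "alen n = n" by (cases n) auto
    then show ?thesis using direct by simp
  next
    case (2 y)
    then have "alen n = n \<or> alen n = 2 + alen y" by (auto simp: alen_even min_def)
    then show ?thesis using direct double[of y] 2 by auto
  next
    case (3 y)
    then have "alen n = n \<or> alen n = 3 + alen y \<or> alen n = 3 + alen (y + 1)"
      using alen_odd[of y] by (simp add: min_def)
    moreover have "(of_nat n :: rat) = 1 + 2 * of_nat y"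
      and "(of_nat n :: rat) = -1 + 2 * of_nat (y + 1)"
      using 3 by simp_all
    ultimately show ?thesis
      using direct double_shift[of y 1] double_shift[of "y + 1" "-1"] 3 by auto
  qed
qed

lemma exists_word_alen_int:
  "\<exists>w. set w \<subseteq> bs_gens \<and> length w = alen_int m \<and> word_eval w = (of_int m, 0)"
proof -
  obtain w where w: "set w \<subseteq> bs_gens" "length w = alen (nat \<bar>m\<bar>)"
    "word_eval w = (of_nat (nat \<bar>m\<bar>), 0)"
    using exists_word_alen by blast
  show ?thesis
  proof (cases "0 \<le> m")
    case True
    then show ?thesis using w by (auto simp: alen_int_def)
  next
    case False
    then show ?thesis
      using w map_bs_flip_gens[OF w(1)] word_eval_map_bs_flip[of w]
      by (intro exI[of _ "map bs_flip w"]) (auto simp: alen_int_def bs_flip_def)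
  qed
qed

section \<open>Lower bound for word lengths in Z[1/2]\<close>

definition expansion_val :: "int \<Rightarrow> int list \<Rightarrow> rat" where
  "expansion_val lo ds = 2 powi lo * of_int (digits_val ds)"

(* Invariant for reading a word letter by letter with current value (v, k):
   v = 2^lo * digits_val ds, the window of places lo .. lo + length ds - 1 contains 0 and k, and
   digits_cost ds + 2 (length ds - 1) - |k| is at most the number of letters read.
   A letter a^(+-1) changes one digit by +-1 and a letter t^(+-1) moves k, widening the window if
   needed; a window of width L containing 0 and k needs at least 2 (L - 1) - |k| such moves. *)
definition expansion_bound :: "int \<Rightarrow> int list \<Rightarrow> int \<Rightarrow> nat \<Rightarrow> bool" where
  "expansion_bound lo ds k n \<longleftrightarrow>
     ds \<noteq> [] \<and> lo \<le> min 0 k \<and> max 0 k \<le> lo + int (length ds) - 1 \<and>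
     digits_cost ds + 2 * (int (length ds) - 1) - \<bar>k\<bar> \<le> int n"

lemma expansion_bound_a:
  assumes "expansion_bound lo ds k n" "\<bar>e\<bar> = 1"
  shows "\<exists>ds'. expansion_bound lo ds' k (Suc n) \<and>
    expansion_val lo ds' = expansion_val lo ds + of_int e * 2 powi k"
proof -
  define i where "i = nat (k - lo)"
  have i: "i < length ds" "k = lo + int i"
    using assms(1) by (auto simp: expansion_bound_def i_def)
  define ds' where "ds' = ds[i := ds ! i + e]"
  have "digits_cost ds' \<le> digits_cost ds + 1"
    using digits_cost_update[OF i(1), of e] assms(2) by (simp add: ds'_def)
  then have "expansion_bound lo ds' k (Suc n)"
    using assms(1) by (auto simp: expansion_bound_def ds'_def)
  moreover have "expansion_val lo ds' = expansion_val lo ds + of_int e * (2 powi lo * 2 ^ i)"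
    by (simp add: expansion_val_def ds'_def digits_val_update[OF i(1)] ring_distribs mult_ac)
  moreover have "(2::rat) powi lo * 2 ^ i = 2 powi k"
    by (simp add: i(2) power_int_add)
  ultimately show ?thesis by auto
qed

lemma expansion_bound_t:
  assumes "expansion_bound lo ds k n"
  shows "\<exists>ds'. expansion_bound lo ds' (k + 1) (Suc n) \<and>
    expansion_val lo ds' = expansion_val lo ds"
proof (cases "k + 1 \<le> lo + int (length ds) - 1")
  case True
  then have "expansion_bound lo ds (k + 1) (Suc n)"
    using assms by (auto simp: expansion_bound_def)
  then show ?thesis by blast
next
  case False
  then have "expansion_bound lo (ds @ [0]) (k + 1) (Suc n)"
    using assms by (auto simp: expansion_bound_def)
  then show ?thesis by (auto simp: expansion_val_def)
qed

lemma expansion_bound_t_inv: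
  assumes "expansion_bound lo ds k n"
  shows "\<exists>lo' ds'. expansion_bound lo' ds' (k - 1) (Suc n) \<and>
    expansion_val lo' ds' = expansion_val lo ds"
proof (cases "lo \<le> k - 1")
  case True
  then have "expansion_bound lo ds (k - 1) (Suc n)"
    using assms by (auto simp: expansion_bound_def)
  then show ?thesis by blast
next
  case False
  then have "expansion_bound (lo - 1) (0 # ds) (k - 1) (Suc n)"
    using assms by (auto simp: expansion_bound_def)
  moreover have "expansion_val (lo - 1) (0 # ds) = expansion_val lo ds"
    by (simp add: expansion_val_def power_int_diff)
  ultimately show ?thesis by blast
qed

lemma word_expansion:
  assumes "set w \<subseteq> bs_gens" "word_eval w = (v, k)"
  shows "\<exists>lo ds. expansion_bound lo ds k (length w) \<and> v = expansion_val lo ds"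
  using assms
proof (induction w arbitrary: v k rule: rev_induct)
  case Nil
  then have "expansion_bound 0 [0] k (length [])" "v = expansion_val 0 [0]"
    by (auto simp: expansion_bound_def expansion_val_def)
  then show ?case by blast
next
  case (snoc s w)
  obtain v0 k0 where w: "word_eval w = (v0, k0)" by fastforce
  then obtain lo ds where IH: "expansion_bound lo ds k0 (length w)" "v0 = expansion_val lo ds"
    using snoc by auto
  have s: "s \<in> {(1, 0), (-1, 0), (0, 1), (0, -1)}" and vk: "(v, k) = bs_mult (v0, k0) s"
    using snoc.prems w by (auto simp: bs_gens_eq word_eval_append)
  from s show ?case
  proof (elim insertE emptyE)
    assume "s = (1, 0)"
    then show ?case using vk IH expansion_bound_a[OF IH(1), of 1] by force
  next
    assume "s = (-1, 0)"
    then show ?case using vk IH expansion_bound_a[OF IH(1), of "-1"] by force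
  next
    assume "s = (0, 1)"
    then show ?case using vk IH expansion_bound_t[OF IH(1)] by force
  next
    assume "s = (0, -1)"
    then show ?case using vk IH expansion_bound_t_inv[OF IH(1)] by force
  qed
qed

lemma int_eq_pow2_mult_odd:
  assumes "odd m" "(of_int a :: rat) = 2 powi j * of_int m"
  shows "0 \<le> j \<and> a = 2 ^ nat j * m"
proof (cases "0 \<le> j")
  case True
  then have "(of_int a :: rat) = of_int (2 ^ nat j * m)"
    using assms(2) by (simp add: power_int_def)
  then show ?thesis using True by (simp only: of_int_eq_iff)
next
  case False
  then have "(of_int a :: rat) = of_int m / 2 ^ nat (- j)"
    using assms(2) by (simp add: power_int_def power_one_over)
  then have "(of_int (a * 2 ^ nat (- j)) :: rat) = of_int m"
    by (simp add: field_simps)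
  then have "m = a * 2 ^ nat (- j)" by (simp only: of_int_eq_iff)
  moreover have "nat (- j) \<noteq> 0" using False by simp
  ultimately have "even m" by simp
  then show ?thesis using assms(1) by simp
qed

lemma alen_int_le_length:
  assumes "set w \<subseteq> bs_gens" "word_eval w = (2 powi j * of_int m, 0)" "odd m"
  shows "alen_int m \<le> length w"
proof -
  obtain lo ds where bound: "expansion_bound lo ds 0 (length w)"
    and val: "2 powi j * of_int m = expansion_val lo ds"
    using word_expansion[OF assms(1,2)] by blast
  have "(of_int (digits_val ds) :: rat) = 2 powi (j - lo) * of_int m"
    using val by (simp add: expansion_val_def power_int_diff field_simps)
  then have "digits_val ds = m * 2 ^ nat (j - lo)"
    using int_eq_pow2_mult_odd[OF assms(3)] by (simp add: mult.commute)
  then have "int (alen_int m) \<le> int (alen_int (digits_val ds))"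
    using alen_int_le_mult_pow2 by simp
  also have "\<dots> \<le> digits_cost ds + 2 * (int (length ds) - 1)"
    using alen_int_digits_val_le bound by (simp add: expansion_bound_def)
  also have "\<dots> \<le> int (length w)"
    using bound by (simp add: expansion_bound_def)
  finally show ?thesis by simp
qed

lemma alen_int_le_word_length:
  assumes "odd m"
  shows "alen_int m \<le> word_length (2 powi l * of_int m, 0)"
proof -
  obtain w where "set w \<subseteq> bs_gens" "word_eval w = (of_int m, 0)"
    using exists_word_alen_int by blast
  then obtain w' where "set w' \<subseteq> bs_gens" "word_eval w' = (2 powi l * of_int m, 0)"
    using word_conj_t_pow by blast
  then show ?thesis
    using alen_int_le_length assms by (intro le_word_length)
qed

lemma word_length_odd:
  assumes "odd m"
  shows "word_length (of_int m, 0) = alen_int m"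
proof (rule antisym)
  obtain w where "set w \<subseteq> bs_gens" "length w = alen_int m" "word_eval w = (of_int m, 0)"
    using exists_word_alen_int by blast
  then show "word_length (of_int m, 0) \<le> alen_int m"
    using word_length_le by metis
  show "alen_int m \<le> word_length (of_int m, 0)"
    using alen_int_le_word_length[OF assms, of 0] by simp
qed

section \<open>Conjugacy classes in Z[1/2]\<close>

lemma dyadic_0: "dyadic 0"
  unfolding dyadic_def by (intro exI[of _ 0]) simp

lemma dyadic_pow2_mult_of_int: "dyadic (2 powi l * of_int m)"
proof (cases "0 \<le> l")
  case True
  then have "(2::rat) powi l * of_int m = of_int (2 ^ nat l * m) / 2 ^ 0"
    by (simp add: power_int_def)
  then show ?thesis unfolding dyadic_def by blast
next
  case False
  then have "(2::rat) powi l * of_int m = of_int m / 2 ^ nat (- l)"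
    by (simp add: power_int_def power_one_over)
  then show ?thesis unfolding dyadic_def by blast
qed

lemma dyadic_eq_pow2_mult_odd:
  assumes "dyadic x" "x \<noteq> 0"
  obtains m j where "odd m" "x = 2 powi j * of_int m"
proof -
  obtain a k where x: "x = of_int a / 2 ^ k"
    using assms(1) unfolding dyadic_def by blast
  then have "a \<noteq> 0" using assms(2) by auto
  then obtain m where m: "a = 2 ^ multiplicity 2 a * m" "odd m"
    using multiplicity_decompose'[of a 2] by auto
  have "x = 2 powi (int (multiplicity 2 a) - int k) * of_int m"
    by (subst x, subst m(1)) (simp add: power_int_diff)
  then show ?thesis using m(2) that by blast
qed

lemma conj_class_Zhalf: "conj_class (x, 0) = range (\<lambda>l. (2 powi l * x, 0 :: int))"
proof (intro equalityI subsetI)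
  fix g assume "g \<in> conj_class (x, 0)"
  then obtain y l where "g = bs_mult (bs_mult (y, l) (x, 0)) (bs_inv (y, l))"
    unfolding conj_class_def by auto
  then show "g \<in> range (\<lambda>l. (2 powi l * x, 0 :: int))"
    by (simp only: bs_conj_Zhalf) blast
next
  fix g assume "g \<in> range (\<lambda>l. (2 powi l * x, 0 :: int))"
  then obtain l where "g = bs_mult (bs_mult (0, l) (x, 0)) (bs_inv (0, l))"
    by (auto simp only: bs_conj_Zhalf)
  moreover have "(0, l) \<in> BS" by (simp add: BS_def dyadic_0)
  ultimately show "g \<in> conj_class (x, 0)"
    unfolding conj_class_def by blast
qed

lemma conj_class_self: "g \<in> conj_class g"
proof -
  have "bs_one \<in> BS" by (simp add: BS_def bs_one_def dyadic_0)
  moreover have "g = bs_mult (bs_mult bs_one g) (bs_inv bs_one)"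
    by (cases g) (simp add: bs_inv_def bs_one_def)
  ultimately show ?thesis unfolding conj_class_def by blast
qed

lemma conj_class_pow2_mult: "conj_class (2 powi j * x, 0) = conj_class (x, 0)"
proof -
  have "(\<lambda>l. (2 powi l * (2 powi j * x), 0 :: int)) = (\<lambda>l. (2 powi l * x, 0)) \<circ> (\<lambda>l. l + j)"
    by (rule ext) (simp add: power_int_add mult.assoc)
  then have "range (\<lambda>l. (2 powi l * (2 powi j * x), 0 :: int))
      = (\<lambda>l. (2 powi l * x, 0)) ` range (\<lambda>l. l + j)"
    by (metis image_comp)
  also have "range (\<lambda>l::int. l + j) = UNIV"
    by (rule surjI[of _ "\<lambda>l. l - j"]) simp
  finally show ?thesis by (simp add: conj_class_Zhalf)
qed

definition class_of_int :: "int \<Rightarrow> (rat \<times> int) set" where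
  "class_of_int m = conj_class (of_int m, 0)"

lemma class_length_class_of_int_odd:
  assumes "odd m"
  shows "class_length (class_of_int m) = alen_int m"
  unfolding class_length_def
proof (rule Least_equality)
  show "\<exists>g\<in>class_of_int m. word_length g = alen_int m"
    using conj_class_self word_length_odd[OF assms] unfolding class_of_int_def by blast
next
  fix n assume "\<exists>g\<in>class_of_int m. word_length g = n"
  then obtain l where "word_length (2 powi l * of_int m, 0) = n"
    unfolding class_of_int_def conj_class_Zhalf by blast
  then show "alen_int m \<le> n"
    using alen_int_le_word_length[OF assms] by blast
qed

lemma class_length_class_of_int_0: "class_length (class_of_int 0) = 0"
proof -
  have "word_length (0, 0) = 0"
    using word_length_le[of "[]"] by simp
  then have "\<exists>g\<in>class_of_int 0. word_length g = 0"
    using conj_class_self unfolding class_of_int_def by force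
  then show ?thesis
    unfolding class_length_def by (simp add: Least_eq_0)
qed

lemma class_of_int_subset_Zhalf: "class_of_int m \<subseteq> Zhalf"
  using dyadic_pow2_mult_of_int
  by (auto simp: class_of_int_def conj_class_Zhalf Zhalf_def BS_def)

lemma inj_on_class_of_int: "inj_on class_of_int {m. m = 0 \<or> odd m}"
proof (rule inj_onI)
  fix m m' assume m: "m \<in> {m. m = 0 \<or> odd m}" and m': "m' \<in> {m. m = 0 \<or> odd m}"
    and eq: "class_of_int m = class_of_int m'"
  have "(of_int m', 0) \<in> class_of_int m"
    using conj_class_self eq unfolding class_of_int_def by metis
  then obtain l where l: "(of_int m' :: rat) = 2 powi l * of_int m"
    unfolding class_of_int_def conj_class_Zhalf by blast
  show "m = m'"
  proof (cases "m = 0 \<or> m' = 0")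
    case True
    then show ?thesis using l by auto
  next
    case False
    then have "odd m" "odd m'" using m m' by auto
    then show ?thesis
      using int_eq_pow2_mult_odd[OF \<open>odd m\<close> l] by (cases "nat l") auto
  qed
qed

lemma conj_class_Zhalf_cases:
  assumes "g \<in> Zhalf"
  obtains "conj_class g = class_of_int 0" | m where "odd m" "conj_class g = class_of_int m"
proof -
  obtain x where x: "g = (x, 0)" "dyadic x"
    using assms unfolding Zhalf_def BS_def by (cases g) auto
  show ?thesis
  proof (cases "x = 0")
    case True
    then show ?thesis using x that(1) by (simp add: class_of_int_def)
  next
    case False
    then obtain m j where "odd m" "x = 2 powi j * of_int m"
      using dyadic_eq_pow2_mult_odd x(2) by blast
    then show ?thesis
      using x that(2) conj_class_pow2_mult by (simp add: class_of_int_def)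
  qed
qed

lemma Zhalf_classes_eq:
  "{C. (\<exists>g\<in>BS. C = conj_class g) \<and> C \<subseteq> Zhalf \<and> class_length C = n}
    = class_of_int ` {m. (m = 0 \<and> n = 0) \<or> (odd m \<and> alen_int m = n)}"
proof (intro equalityI subsetI)
  fix C assume "C \<in> {C. (\<exists>g\<in>BS. C = conj_class g) \<and> C \<subseteq> Zhalf \<and> class_length C = n}"
  then obtain g where g: "C = conj_class g" "C \<subseteq> Zhalf" "class_length C = n"
    by blast
  then have "g \<in> Zhalf" using conj_class_self by blast
  then show "C \<in> class_of_int ` {m. (m = 0 \<and> n = 0) \<or> (odd m \<and> alen_int m = n)}"
  proof (cases rule: conj_class_Zhalf_cases)
    case 1
    then show ?thesis using class_length_class_of_int_0 g by auto
  next
    case (2 m)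
    then show ?thesis using class_length_class_of_int_odd g by auto
  qed
next
  fix C assume "C \<in> class_of_int ` {m. (m = 0 \<and> n = 0) \<or> (odd m \<and> alen_int m = n)}"
  then obtain m where m: "C = class_of_int m" "(m = 0 \<and> n = 0) \<or> (odd m \<and> alen_int m = n)"
    by blast
  have "(of_int m, 0) \<in> BS"
    using dyadic_pow2_mult_of_int[of 0 m] by (simp add: BS_def)
  moreover have "class_length C = n"
    using m class_length_class_of_int_0 class_length_class_of_int_odd by auto
  ultimately show "C \<in> {C. (\<exists>g\<in>BS. C = conj_class g) \<and> C \<subseteq> Zhalf \<and> class_length C = n}"
    using m class_of_int_subset_Zhalf unfolding class_of_int_def by blast
qed

lemma c0_eq_card: "c0 n = card {m. (m = 0 \<and> n = 0) \<or> (odd m \<and> alen_int m = n)}"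
proof -
  have "inj_on class_of_int {m. (m = 0 \<and> n = 0) \<or> (odd m \<and> alen_int m = n)}"
    by (rule inj_on_subset[OF inj_on_class_of_int]) auto
  then show ?thesis
    unfolding c0_def Zhalf_classes_eq by (rule card_image)
qed

lemma card_Un_disjoint_images:
  assumes "finite S" "inj_on f S" "inj_on g S" "f ` S \<inter> g ` S = {}"
  shows "card (f ` S \<union> g ` S) = 2 * card S"
  using assms by (simp add: card_Un_disjoint card_image)

definition odd_count :: "nat \<Rightarrow> nat" where
  "odd_count n = card {k. odd k \<and> alen k = n}"

definition pos_count :: "nat \<Rightarrow> nat" where
  "pos_count n = card {k. 1 \<le> k \<and> alen k = n}"

lemma finite_alen_fibre_subset: "finite {k. P k \<and> alen k = n}"
  using finite_alen_fibre[of n] by (rule rev_finite_subset) blast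

lemma c0_eq_odd_count:
  assumes "1 \<le> n"
  shows "c0 n = 2 * odd_count n"
proof -
  define S where "S = {k. odd k \<and> alen k = n}"
  have "{m. (m = 0 \<and> n = 0) \<or> (odd m \<and> alen_int m = n)} = int ` S \<union> (\<lambda>k. - int k) ` S"
  proof (intro equalityI subsetI)
    fix m :: int assume "m \<in> {m. (m = 0 \<and> n = 0) \<or> (odd m \<and> alen_int m = n)}"
    then have m: "odd m" "alen (nat \<bar>m\<bar>) = n"
      using assms by (auto simp: alen_int_def)
    then have "nat \<bar>m\<bar> \<in> S" by (simp add: S_def even_nat_iff)
    moreover have "m = int (nat \<bar>m\<bar>) \<or> m = - int (nat \<bar>m\<bar>)" by linarith
    ultimately show "m \<in> int ` S \<union> (\<lambda>k. - int k) ` S" by blast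
  qed (auto simp: S_def alen_int_def)
  moreover have "card (int ` S \<union> (\<lambda>k. - int k) ` S) = 2 * card S"
  proof (rule card_Un_disjoint_images)
    have "0 < k" if "k \<in> S" for k using that by (simp add: S_def odd_pos)
    then show "int ` S \<inter> (\<lambda>k. - int k) ` S = {}" by force
  qed (auto simp: S_def finite_alen_fibre_subset inj_on_def)
  ultimately show ?thesis
    by (simp add: c0_eq_card odd_count_def S_def)
qed

lemma odd_alen_fibre_eq:
  assumes "13 \<le> n"
  defines "S \<equiv> {j. 1 \<le> j \<and> alen j = n - 5}"
  shows "{k. odd k \<and> alen k = n} = (\<lambda>j. 4 * j + 1) ` S \<union> (\<lambda>j. 4 * j - 1) ` S"
proof (intro equalityI subsetI)
  fix k assume "k \<in> {k. odd k \<and> alen k = n}"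
  then have k: "odd k" "alen k = n" by auto
  then have "13 \<le> k" using alen_le[of k] assms by linarith
  have "k mod 4 = 1 \<or> k mod 4 = 3" using \<open>odd k\<close> by presburger
  then consider "k mod 4 = 1" | "k mod 4 = 3" by blast
  then show "k \<in> (\<lambda>j. 4 * j + 1) ` S \<union> (\<lambda>j. 4 * j - 1) ` S"
  proof cases
    case 1
    then have "k = 4 * (k div 4) + 1" "2 \<le> k div 4" using \<open>13 \<le> k\<close> by presburger+
    then have "k div 4 \<in> S"
      using k alen_4_mult_plus_1[of "k div 4"] by (simp add: S_def)
    then show ?thesis using \<open>k = 4 * (k div 4) + 1\<close> by blast
  next
    case 2
    then have "k = 4 * (k div 4 + 1) - 1" "3 \<le> k div 4 + 1" using \<open>13 \<le> k\<close> by presburger+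
    then have "k div 4 + 1 \<in> S"
      using k alen_4_mult_minus_1[of "k div 4 + 1"] by (simp add: S_def)
    then show ?thesis using \<open>k = 4 * (k div 4 + 1) - 1\<close> by blast
  qed
next
  fix k assume "k \<in> (\<lambda>j. 4 * j + 1) ` S \<union> (\<lambda>j. 4 * j - 1) ` S"
  then obtain j where j: "j \<in> S" "k = 4 * j + 1 \<or> k = 4 * j - 1" by blast
  then have "8 \<le> j" using alen_le[of j] assms by (simp add: S_def)
  then show "k \<in> {k. odd k \<and> alen k = n}"
    using j alen_4_mult_plus_1[of j] alen_4_mult_minus_1[of j] assms by (auto simp: S_def)
qed

lemma pos_alen_fibre_eq:
  assumes "13 \<le> n"
  defines "S \<equiv> {y. 1 \<le> y \<and> alen y = n - 2}"
  shows "{k. 1 \<le> k \<and> alen k = n} = {k. odd k \<and> alen k = n} \<union> (\<lambda>y. 2 * y) ` S"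
proof (intro equalityI subsetI)
  fix k assume "k \<in> {k. 1 \<le> k \<and> alen k = n}"
  then have k: "1 \<le> k" "alen k = n" by auto
  show "k \<in> {k. odd k \<and> alen k = n} \<union> (\<lambda>y. 2 * y) ` S"
  proof (cases "odd k")
    case True
    then show ?thesis using k by simp
  next
    case False
    then obtain y where y: "k = 2 * y" by auto
    moreover have "13 \<le> k" using alen_le[of k] k assms by linarith
    ultimately have "y \<in> S" using k alen_double[of y] by (simp add: S_def)
    then show ?thesis using y by blast
  qed
next
  fix k assume "k \<in> {k. odd k \<and> alen k = n} \<union> (\<lambda>y. 2 * y) ` S"
  then show "k \<in> {k. 1 \<le> k \<and> alen k = n}"
  proof
    assume "k \<in> (\<lambda>y. 2 * y) ` S"
    then obtain y where y: "y \<in> S" "k = 2 * y" by blast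
    then have "2 \<le> y" using alen_le[of y] assms by (simp add: S_def)
    then show ?thesis using y alen_double[of y] assms by (simp add: S_def)
  qed (auto elim: oddE)
qed

lemma odd_count_eq:
  assumes "13 \<le> n"
  shows "odd_count n = 2 * pos_count (n - 5)"
proof -
  let ?S = "{j. 1 \<le> j \<and> alen j = n - 5}"
  have "card ((\<lambda>j. 4 * j + 1) ` ?S \<union> (\<lambda>j. 4 * j - 1) ` ?S) = 2 * card ?S"
  proof (rule card_Un_disjoint_images)
    have "4 * a + 1 \<noteq> 4 * b - 1" if "1 \<le> b" for a b :: nat using that by presburger
    then show "(\<lambda>j. 4 * j + 1) ` ?S \<inter> (\<lambda>j. 4 * j - 1) ` ?S = {}" by auto
  qed (auto simp: finite_alen_fibre_subset inj_on_def)
  then show ?thesis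
    by (simp add: odd_count_def pos_count_def odd_alen_fibre_eq[OF assms])
qed

lemma pos_count_eq:
  assumes "13 \<le> n"
  shows "pos_count n = odd_count n + pos_count (n - 2)"
proof -
  let ?S = "{y. 1 \<le> y \<and> alen y = n - 2}"
  have "card ((\<lambda>y. 2 * y) ` ?S) = card ?S" by (rule card_image) (simp add: inj_on_def)
  moreover have "{k. odd k \<and> alen k = n} \<inter> (\<lambda>y. 2 * y) ` ?S = {}" by auto
  ultimately show ?thesis
    unfolding pos_count_def odd_count_def pos_alen_fibre_eq[OF assms]
    by (simp add: card_Un_disjoint finite_alen_fibre_subset)
qed

lemma odd_count_recurrence:
  assumes "18 \<le> n"
  shows "odd_count n = odd_count (n - 2) + 2 * odd_count (n - 5)"
proof -
  have "odd_count n = 2 * pos_count (n - 5)" using odd_count_eq assms by simp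
  moreover have "pos_count (n - 5) = odd_count (n - 5) + pos_count (n - 2 - 5)"
    using pos_count_eq[of "n - 5"] assms by (simp add: diff_commute)
  moreover have "odd_count (n - 2) = 2 * pos_count (n - 2 - 5)"
    using odd_count_eq[of "n - 2"] assms by simp
  ultimately show ?thesis by simp
qed

theorem proposition3p9:
  shows "rational_series (Abs_fps (\<lambda>n. int (c0 n)))"
proof (rule rational_series_of_linear_recurrence)
  fix n :: nat assume "18 \<le> n"
  then have "c0 n = c0 (n - 2) + 2 * c0 (n - 5)"
    using odd_count_recurrence c0_eq_odd_count[of n] c0_eq_odd_count[of "n - 2"]
      c0_eq_odd_count[of "n - 5"] by simp
  then show "int (c0 n) = (\<Sum>i=1..5. (if i = 2 then 1 else if i = 5 then 2 else 0) * int (c0 (n - i)))"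
    by (simp add: numeral_eq_Suc)
qed simp

end
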